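(* Let $A\in\mathbb{R}^{n\times n}$ be Hurwitz, $B\in\mathbb{R}^{n\times m}$, $C\in\mathbb{R}^{1\times n}$, and $M\in\mathbb{R}^{n\times n}$ symmetric. Let $W,V\in\mathbb{R}^{n\times r}$ with $W^\top V=I_r$. Define $\hat A=W^\top AV$, $\hat B=W^\top B$, $\hat C=CV$, $\hat M=V^\top MV$, and assume $\hat A$ is Hurwitz. Let $P$, $X$, $\hat P$ be the unique solutions of $$AP+PA^\top+BB^\top=0,\qquad AX+X\hat A^\top+B\hat B^\top=0,\qquad \hat A\hat P+\hat P\hat A^\top+\hat B\hat B^\top=0,$$ and let $K\in\mathbb{R}^{n\times r}$, $L\in\mathbb{R}^{r\times r}$ be the unique solutions of $$A^\top K+K\hat A-C^\top\hat C-2MX\hat M=0,\qquad \hat A^\top L+L\hat A+\hat C^\top\hat C+2\hat M\hat P\hat M=0.$$ Consider the cost function $$J_1(W,V)=\mathrm{tr}\big(CPC^\top-2CX\hat C^\top+\hat C\hat P\hat C^\top\big)+\mathrm{tr}\big(PMPM-2X^\top MX\hat M+\hat P\hat M\hat P\hat M\big),$$ regarded as a function of the two matrix variables $W,V\in\mathbb{R}^{n\times r}$ (through $\hat A,\hat B,\hat C,\hat M$). Then the partial-derivative matrices $J_{1,W}=\nabla_W J_1\in\mathbb{R}^{n\times r}$ and $J_{1,V}=\nabla_V J_1\in\mathbb{R}^{n\times r}$, defined entrywise by $(J_{1,W})_{ij}=\partial J_1/\partial W_{ij}$ and $(J_{1,V})_{ij}=\partial J_1/\partial V_{ij}$, are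 given by $$J_{1,W}=2\Big(AV\big(X^\top K+\hat PL\big)+BB^\top\big(K+WL\big)\Big),$$ $$J_{1,V}=2\Big(A^\top W\big(K^\top X+L\hat P\big)+C^\top C\big(V\hat P-X\big)+2MV\big(\hat P\hat M\hat P-X^\top MX\big)\Big).$$
   Context: This concerns a linear time-invariant system with quadratic output (LQO system) $\dot x=Ax+Bu$, $y=Cx+x^\top Mx$, and a reduced-order model of the same form with matrices $(\hat A,\hat B,\hat C,\hat M)$ obtained by Petrov–Galerkin projection. The function $J_1(W,V)$ equals the squared $H_2$ norm of the error system between the full and reduced LQO systems; equivalently $J_1=\mathrm{tr}(B^\top QB+2B^\top Y\hat B+\hat B^\top\hat Q\hat B)$, where $A^\top Q+QA+C^\top C+MPM=0$, $A^\top Y+Y\hat A-C^\top\hat C-MX\hat M=0$, and $\hat A^\top\hat Q+\hat Q\hat A+\hat C^\top\hat C+\hat M\hat P\hat M=0$. A matrix is Hurwitz if all its eigenvalues have negative real part. *)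

theory Defs
  imports "HOL-Analysis.Analysis"
begin

definition hurwitz :: "real^'n^'n \<Rightarrow> bool" where
  "hurwitz A \<longleftrightarrow>
     (\<forall>(lam::complex) (v::complex^'n). v \<noteq> 0 \<and> map_matrix complex_of_real A *v v = lam *s v
        \<longrightarrow> Re lam < 0)"

definition red_A :: "real^'n^'n \<Rightarrow> real^'r^'n \<Rightarrow> real^'r^'n \<Rightarrow> real^'r^'r" where
  "red_A A W V = transpose W ** A ** V"
definition red_B :: "real^'m^'n \<Rightarrow> real^'r^'n \<Rightarrow> real^'m^'r" where
  "red_B B W = transpose W ** B"
definition red_C :: "real^'n^1 \<Rightarrow> real^'r^'n \<Rightarrow> real^'r^1" where
  "red_C C V = C ** V"
definition red_M :: "real^'n^'n \<Rightarrow> real^'r^'n \<Rightarrow> real^'r^'r" where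
  "red_M M V = transpose V ** M ** V"

definition J1 :: "real^'n^'n \<Rightarrow> real^'m^'n \<Rightarrow> real^'n^1 \<Rightarrow> real^'n^'n
                  \<Rightarrow> real^'r^'n \<Rightarrow> real^'r^'n \<Rightarrow> real" where
  "J1 A B C M W V =
     (let Ah = (red_A A W V :: real^'r^'r); Bh = (red_B B W :: real^'m^'r);
          Ch = (red_C C V :: real^'r^1); Mh = (red_M M V :: real^'r^'r);
          P = (THE P::real^'n^'n. A ** P + P ** transpose A + B ** transpose B = 0);
          X = (THE X::real^'r^'n. A ** X + X ** transpose Ah + B ** transpose Bh = 0);
          Ph = (THE Ph::real^'r^'r. Ah ** Ph + Ph ** transpose Ah + Bh ** transpose Bh = 0)
      in trace (C ** P ** transpose C - 2 *\<^sub>R (C ** X ** transpose Ch) + Ch ** Ph ** transpose Ch)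
       + (trace (P ** M ** P ** M) - 2 * trace (transpose X ** M ** X ** Mh)
          + trace (Ph ** Mh ** Ph ** Mh)))"

definition ematrix :: "'i::finite \<Rightarrow> 'j::finite \<Rightarrow> real^'j^'i" where
  "ematrix i j = (\<chi> a b. if a = i \<and> b = j then 1 else 0)"

end

(*
  J1 depends on W and V only through the reduced matrices Ah = W^T A V, Bh = W^T B, Ch = C V and
  Mh = V^T M V, so its partial derivatives follow by the chain rule from its derivatives with
  respect to these. The Gramians X and Ph solve Sylvester equations A Y + Y G^T + R = 0 with
  Hurwitz A and G, whose operator is invertible because A and -G^T have disjoint spectra; hence
  they depend differentiably on the reduced matrices, and their derivatives X', Ph' solve
  Sylvester equations with the same operators. In the derivative of the cost, X' and Ph' are paired
  with C^T Ch + 2 M X Mh and Ch^T Ch + 2 Mh Ph Mh, which the equations for K and L express through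
  the adjoint Sylvester operators; moving these operators onto X' and Ph' replaces the unknown
  derivatives by the known right-hand sides and yields the reduced gradients
  2 (K^T X + L Ph), 2 (K^T B + L Bh), 2 (Ch Ph - C X) and 2 (Ph Mh Ph - X^T M X).
*)
theory Submission
  imports Defs "HOL-Computational_Algebra.Fundamental_Theorem_Algebra"
begin

section \<open>Matrix algebra and the Frobenius inner product\<close>

lemma matrix_add_rdistrib: "((A::'a::semiring_1^'n^'m) + B) ** C = A ** C + B ** C"
  by (vector matrix_matrix_mult_def sum.distrib[symmetric] field_simps)

lemma matrix_diff_ldistrib: "(A::'a::ring_1^'n^'m) ** (B - C) = A ** B - A ** C"
  by (vector matrix_matrix_mult_def sum_subtractf[symmetric] field_simps)

lemma matrix_diff_rdistrib: "((A::'a::ring_1^'n^'m) - B) ** C = A ** C - B ** C"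
  by (vector matrix_matrix_mult_def sum_subtractf[symmetric] field_simps)

lemma matrix_mult_minus_left: "(- (A::'a::ring_1^'n^'m)) ** B = - (A ** B)"
  by (vector matrix_matrix_mult_def sum_negf[symmetric])

lemma matrix_mult_minus_right: "(A::'a::ring_1^'n^'m) ** (- B) = - (A ** B)"
  by (vector matrix_matrix_mult_def sum_negf[symmetric])

lemma matrix_scaleR_left: "(k *\<^sub>R (A::real^'n^'m)) ** B = k *\<^sub>R (A ** B)"
  by (simp add: scalar_matrix_assoc)

lemma matrix_scaleR_right: "(A::real^'n^'m) ** (k *\<^sub>R B) = k *\<^sub>R (A ** B)"
  by (simp add: matrix_scalar_ac scalar_matrix_assoc)

lemmas matrix_mult_distribs =
  matrix_add_ldistrib matrix_add_rdistrib matrix_diff_ldistrib matrix_diff_rdistrib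
  matrix_mult_minus_left matrix_mult_minus_right matrix_scaleR_left matrix_scaleR_right

lemma transpose_add: "transpose ((A::'a::semiring_1^'n^'m) + B) = transpose A + transpose B"
  by (vector transpose_def)

lemma transpose_diff: "transpose ((A::'a::ring_1^'n^'m) - B) = transpose A - transpose B"
  by (vector transpose_def)

lemma transpose_zero [simp]: "transpose (0::'a::semiring_1^'n^'m) = 0"
  by (vector transpose_def)

lemma trace_transpose: "trace (transpose (A::'a::semiring_1^'n^'n)) = trace A"
  by (simp add: trace_def transpose_def)

lemma inner_matrix_eq_trace: "(A::real^'n^'m) \<bullet> B = trace (transpose A ** B)"
  by (simp add: inner_vec_def trace_def matrix_matrix_mult_def transpose_def) (rule sum.swap)

lemma trace_matrix_mult_eq_inner: "trace ((A::real^'m^'n) ** B) = transpose A \<bullet> B"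
  by (simp add: inner_matrix_eq_trace)

lemma inner_transpose [simp]: "transpose (A::real^'n^'m) \<bullet> transpose B = A \<bullet> B"
  by (simp add: inner_vec_def transpose_def) (rule sum.swap)

lemma inner_matrix_mult_left: "((A::real^'k^'m) ** B) \<bullet> C = B \<bullet> (transpose A ** C)"
  by (simp add: inner_matrix_eq_trace matrix_transpose_mul matrix_mul_assoc)

lemma inner_matrix_mult_right: "((A::real^'k^'m) ** B) \<bullet> C = A \<bullet> (C ** transpose B)"
proof -
  have "trace (transpose B ** (transpose A ** C)) = trace (transpose A ** C ** transpose B)"
    by (subst trace_mul_sym) (simp add: matrix_mul_assoc)
  then show ?thesis
    by (simp add: inner_matrix_eq_trace matrix_transpose_mul matrix_mul_assoc)
qed

lemma ematrix_eq_axis: "ematrix i j = axis i (axis j 1)"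
  by (simp add: ematrix_def axis_def vec_eq_iff)

lemma inner_ematrix: "ematrix i j \<bullet> (A::real^'n^'m) = A $ i $ j"
  by (simp add: ematrix_eq_axis inner_axis')

lemma trace_scaleR: "trace (c *\<^sub>R (A::real^'n^'n)) = c * trace A"
  by (simp add: trace_def sum_distrib_left)

lemma trace_mult_transpose_eq_inner: "trace ((A::real^'n^'m) ** transpose B) = B \<bullet> A"
  unfolding inner_matrix_eq_trace by (rule trace_mul_sym)

lemma trace_symmetric_mult_eq_inner:
  "transpose S = S \<Longrightarrow> trace ((S::real^'n^'n) ** A) = S \<bullet> A"
  using trace_matrix_mult_eq_inner[of S A] by simp

lemma trace_mult3_transpose_eq_inner_left:
  "trace ((A::real^'k^'m) ** B ** transpose D) = B \<bullet> (transpose A ** D)"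
  unfolding trace_mult_transpose_eq_inner by (subst inner_commute) (rule inner_matrix_mult_left)

lemma trace_mult3_transpose_eq_inner_right:
  "trace ((A::real^'k^'m) ** B ** transpose D) = A \<bullet> (D ** transpose B)"
  unfolding trace_mult_transpose_eq_inner by (subst inner_commute) (rule inner_matrix_mult_right)

lemma trace_symmetric_sandwich:
  fixes M :: "real^'n^'n" and N :: "real^'r^'r" and Y Z :: "real^'r^'n"
  assumes "transpose M = M" "transpose N = N"
  shows "trace (transpose Y ** M ** Z ** N) = trace (transpose Z ** M ** Y ** N)"
proof -
  have "trace (transpose Y ** M ** Z ** N) = trace (transpose (transpose Y ** M ** Z ** N))"
    by (rule trace_transpose[symmetric])
  also have "\<dots> = trace (N ** (transpose Z ** M ** Y))"
    by (simp add: matrix_transpose_mul assms matrix_mul_assoc)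
  also have "\<dots> = trace (transpose Z ** M ** Y ** N)"
    by (subst trace_mul_sym) (simp add: matrix_mul_assoc)
  finally show ?thesis .
qed

lemma inner_matrix_mult_transpose: "((Y::real^'k^'n) ** transpose D) \<bullet> K = D \<bullet> (transpose K ** Y)"
  by (metis inner_commute inner_matrix_mult_left inner_matrix_mult_right transpose_transpose)

lemma inner_sylvester_adjoint:
  "((A::real^'n^'n) ** Y + Y ** transpose G) \<bullet> K = Y \<bullet> (transpose A ** K + K ** G)"
  using inner_matrix_mult_left[of A Y K] inner_matrix_mult_right[of Y "transpose G" K]
  by (simp add: inner_add_left inner_add_right)

lemma inner_symmetrized_mult:
  assumes "transpose L = L"
  shows "((Y::real^'k^'n) ** transpose Z + Z ** transpose Y) \<bullet> L = 2 * (Z \<bullet> (L ** Y))"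
  using inner_matrix_mult_transpose[of Y Z L] inner_matrix_mult_right[of Z "transpose Y" L] assms
  by (simp add: inner_add_left)

lemma inner_transpose_matrix_mult: "(transpose E ** (Y::real^'k^'n)) \<bullet> S = E \<bullet> (Y ** transpose S)"
  using inner_matrix_mult_right[of "transpose E" Y S] inner_transpose[of E "Y ** transpose S"]
  by (simp add: matrix_transpose_mul)

section \<open>Polynomials evaluated at matrices\<close>

lemma mat_add: "mat (a + b) = (mat a + mat b :: 'a::semiring_1^'n^'n)"
  by (vector mat_def)

lemma mat_uminus: "mat (- a) = (- mat a :: 'a::ring_1^'n^'n)"
  by (vector mat_def)

lemma mat_mult_left: "(mat c :: 'a::comm_semiring_1^'m^'m) ** A = (\<chi> i j. c * A $ i $ j)"
  unfolding matrix_matrix_mult_def mat_def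
  by (auto simp: vec_eq_iff if_distrib if_distribR sum.delta cong: if_cong)

lemma mat_mult_right: "(A :: 'a::comm_semiring_1^'m^'n) ** mat c = (\<chi> i j. c * A $ i $ j)"
  unfolding matrix_matrix_mult_def mat_def
  by (auto simp: vec_eq_iff if_distrib if_distribR sum.delta' mult.commute cong: if_cong)

lemma mat_mult_commute: "(mat c :: 'a::comm_semiring_1^'n^'n) ** A = A ** mat c"
  by (simp add: mat_mult_left mat_mult_right)

lemma matrix_mult_mat_left_commute:
  "(A::'a::comm_semiring_1^'n^'n) ** (mat c ** B) = mat c ** (A ** B)"
  by (metis matrix_mul_assoc mat_mult_commute)

lemma mat_mult: "mat (a * b) = (mat a ** mat b :: 'a::comm_semiring_1^'n^'n)"
  by (simp add: mat_mult_left) (vector mat_def)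

lemma matrix_mult_sum_right:
  "finite S \<Longrightarrow> (A::'a::semiring_1^'n^'m) ** (\<Sum>i\<in>S. f i) = (\<Sum>i\<in>S. A ** f i)"
  by (induction S rule: finite_induct) (auto simp: matrix_add_ldistrib)

fun matrix_pow :: "'a::semiring_1^'n^'n \<Rightarrow> nat \<Rightarrow> 'a^'n^'n" where
  "matrix_pow A 0 = mat 1"
| "matrix_pow A (Suc k) = A ** matrix_pow A k"

fun matrix_prod :: "nat \<Rightarrow> (nat \<Rightarrow> 'a::semiring_1^'n^'n) \<Rightarrow> 'a^'n^'n" where
  "matrix_prod 0 f = mat 1"
| "matrix_prod (Suc d) f = matrix_prod d f ** f d"

definition poly_matrix :: "'a::comm_ring_1 poly \<Rightarrow> 'a^'n^'n \<Rightarrow> 'a^'n^'n" where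
  "poly_matrix p A = (\<Sum>k\<le>degree p. mat (coeff p k) ** matrix_pow A k)"

lemma poly_matrix_eq_sum:
  assumes "degree p \<le> N"
  shows "poly_matrix p A = (\<Sum>k\<le>N. mat (coeff p k) ** matrix_pow A k)"
  unfolding poly_matrix_def
  by (rule sum.mono_neutral_left) (use assms in \<open>auto simp: coeff_eq_0\<close>)

lemma poly_matrix_0 [simp]: "poly_matrix 0 A = 0"
  by (simp add: poly_matrix_def)

lemma poly_matrix_const: "poly_matrix [:a:] A = mat a"
  by (simp add: poly_matrix_def)

lemma poly_matrix_add: "poly_matrix (p + q) A = poly_matrix p A + poly_matrix q A"
proof -
  let ?N = "max (degree p) (degree q)"
  have "poly_matrix (p + q) A = (\<Sum>k\<le>?N. mat (coeff (p + q) k) ** matrix_pow A k)"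
    by (rule poly_matrix_eq_sum) (simp add: degree_add_le)
  also have "\<dots> = (\<Sum>k\<le>?N. mat (coeff p k) ** matrix_pow A k)
                 + (\<Sum>k\<le>?N. mat (coeff q k) ** matrix_pow A k)"
    by (simp add: mat_add matrix_add_rdistrib sum.distrib)
  also have "\<dots> = poly_matrix p A + poly_matrix q A"
    using poly_matrix_eq_sum[of p ?N A] poly_matrix_eq_sum[of q ?N A] by simp
  finally show ?thesis .
qed

lemma poly_matrix_sum:
  "finite S \<Longrightarrow> poly_matrix (\<Sum>i\<in>S. f i) A = (\<Sum>i\<in>S. poly_matrix (f i) A)"
  by (induction S rule: finite_induct) (auto simp: poly_matrix_add)

lemma poly_matrix_smult: "poly_matrix (smult a p) A = mat a ** poly_matrix p A"
proof -
  have "poly_matrix (smult a p) A = (\<Sum>k\<le>degree p. mat (coeff (smult a p) k) ** matrix_pow A k)"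
    by (rule poly_matrix_eq_sum) (simp add: degree_smult_le)
  then show ?thesis
    by (simp add: poly_matrix_def matrix_mult_sum_right mat_mult matrix_mul_assoc)
qed

lemma poly_matrix_pCons_0: "poly_matrix (pCons 0 p) A = A ** poly_matrix p A"
proof -
  have "poly_matrix (pCons 0 p) A
      = (\<Sum>k\<le>Suc (degree p). mat (coeff (pCons 0 p) k) ** matrix_pow A k)"
    by (rule poly_matrix_eq_sum) (simp add: degree_pCons_le)
  also have "\<dots> = (\<Sum>k\<le>degree p. mat (coeff p k) ** (A ** matrix_pow A k))"
    by (subst sum.atMost_Suc_shift) simp
  also have "\<dots> = A ** poly_matrix p A"
    unfolding poly_matrix_def matrix_mult_sum_right[OF finite_atMost]
    by (simp add: matrix_mult_mat_left_commute)
  finally show ?thesis .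
qed

lemma poly_matrix_pCons: "poly_matrix (pCons a p) A = mat a + A ** poly_matrix p A"
  by (metis add_0 add.right_neutral pCons_0_0 add_pCons poly_matrix_add poly_matrix_const
      poly_matrix_pCons_0)

lemma poly_matrix_mult: "poly_matrix (p * q) A = poly_matrix p A ** poly_matrix q A"
proof (induction p rule: pCons_induct)
  case (pCons a p)
  have "poly_matrix (pCons a p * q) A
      = mat a ** poly_matrix q A + A ** (poly_matrix p A ** poly_matrix q A)"
    by (simp add: poly_matrix_add poly_matrix_smult poly_matrix_pCons_0 pCons.IH)
  also have "\<dots> = poly_matrix (pCons a p) A ** poly_matrix q A"
    by (simp add: poly_matrix_pCons matrix_add_rdistrib matrix_mul_assoc)
  finally show ?case .
qed simp

lemma poly_matrix_prod: "poly_matrix (\<Prod>i<d. f i) A = matrix_prod d (\<lambda>i. poly_matrix (f i) A)"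
proof (induction d)
  case 0
  have "poly_matrix [:1:] A = mat 1" by (rule poly_matrix_const)
  then show ?case by (simp add: one_pCons)
qed (simp add: poly_matrix_mult)

lemma poly_matrix_linear_factor: "poly_matrix [:- z, 1:] A = A - mat z"
  by (simp add: poly_matrix_pCons poly_matrix_const mat_uminus)

lemma poly_matrix_monom: "poly_matrix (monom c k) A = mat c ** matrix_pow A k"
  by (induction k) (simp_all add: poly_matrix_const monom_0 monom_Suc poly_matrix_pCons_0
      matrix_mult_mat_left_commute)

text \<open>A dimension count instead of Cayley--Hamilton: the \<open>N + 1\<close> powers \<open>G\<^sup>0, \<dots>, G\<^sup>N\<close>,
  \<open>N = DIM(complex^'r^'r)\<close>, are linearly dependent over \<open>\<real>\<close>.\<close>
lemma poly_matrix_annihilator_exists: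
  fixes G :: "complex^'r^'r"
  shows "\<exists>q. q \<noteq> 0 \<and> poly_matrix q G = 0"
proof -
  define N where "N = DIM(complex^'r^'r)"
  show ?thesis
  proof (cases "inj_on (matrix_pow G) {..N}")
    case False
    then obtain i j where ij: "i \<noteq> j" "matrix_pow G i = matrix_pow G j"
      by (auto simp: inj_on_def)
    define q where "q = monom 1 i + monom (-1::complex) j"
    have "coeff q i = 1" using ij by (simp add: q_def coeff_monom)
    moreover have "poly_matrix q G = 0"
      using ij
      by (simp add: q_def poly_matrix_add poly_matrix_monom mat_uminus matrix_mult_minus_left)
    ultimately show ?thesis by (metis coeff_0 zero_neq_one)
  next
    case True
    let ?S = "matrix_pow G ` {..N}"
    have "card ?S = Suc N" using True by (simp add: card_image)
    then have "dependent ?S"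
      using dependent_biggerset[of ?S] unfolding N_def by simp
    then obtain u v where v: "v \<in> ?S" "u v \<noteq> 0" and uv: "(\<Sum>v\<in>?S. u v *\<^sub>R v) = 0"
      using real_vector.dependent_finite[of ?S] by auto
    define q where "q = (\<Sum>k\<le>N. monom (complex_of_real (u (matrix_pow G k))) k)"
    obtain k0 where k0: "k0 \<le> N" "v = matrix_pow G k0" using v by auto
    have "coeff q k0 = complex_of_real (u (matrix_pow G k0))"
      unfolding q_def coeff_sum using k0 by (simp add: coeff_monom)
    then have "q \<noteq> 0" using v k0 by auto
    have of_real_mat: "mat (complex_of_real a) ** Y = a *\<^sub>R Y" for a and Y :: "complex^'r^'r"
      by (simp add: mat_mult_left vec_eq_iff) (simp add: scaleR_conv_of_real)
    have "poly_matrix q G = (\<Sum>k\<le>N. u (matrix_pow G k) *\<^sub>R matrix_pow G k)"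
      unfolding q_def by (simp add: poly_matrix_sum poly_matrix_monom of_real_mat)
    also have "\<dots> = (\<Sum>v\<in>?S. u v *\<^sub>R v)"
      using True by (simp add: sum.reindex)
    finally show ?thesis using \<open>q \<noteq> 0\<close> uv by auto
  qed
qed

lemma linear_factors_annihilate:
  fixes G :: "complex^'r^'r"
  obtains d z where "matrix_prod d (\<lambda>i. G - mat (z i)) = 0"
proof -
  obtain q where q: "q \<noteq> 0" "poly_matrix q G = 0"
    using poly_matrix_annihilator_exists by blast
  obtain z where z: "smult (lead_coeff q) (\<Prod>i<degree q. [:- z i, 1:]) = q"
    using complex_poly_decompose' by blast
  let ?P = "matrix_prod (degree q) (\<lambda>i. G - mat (z i))"
  have "poly_matrix q G = mat (lead_coeff q) ** ?P"
    by (subst z[symmetric]) (simp add: poly_matrix_smult poly_matrix_prod poly_matrix_linear_factor)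
  then have "mat (lead_coeff q) ** ?P = 0"
    using q(2) by simp
  then have "mat (inverse (lead_coeff q)) ** (mat (lead_coeff q) ** ?P) = 0"
    by simp
  then have "?P = 0"
    using q(1) by (simp add: matrix_mul_assoc flip: mat_mult)
  then show thesis by (rule that)
qed

lemma matrix_prod_commute:
  assumes "\<And>i. A ** f i = f i ** A"
  shows "A ** matrix_prod d f = matrix_prod d f ** A"
proof (induction d)
  case (Suc d)
  have "A ** matrix_prod (Suc d) f = (A ** matrix_prod d f) ** f d"
    by (simp add: matrix_mul_assoc)
  also have "\<dots> = matrix_prod d f ** (A ** f d)"
    by (simp add: Suc.IH matrix_mul_assoc)
  also have "\<dots> = matrix_prod (Suc d) f ** A"
    by (simp add: assms matrix_mul_assoc)
  finally show ?case .
qed simp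

lemma shifts_commute:
  "((G::'a::comm_ring_1^'n^'n) - mat z) ** (G - mat w) = (G - mat w) ** (G - mat z)"
  by (simp add: matrix_diff_ldistrib matrix_diff_rdistrib mat_mult_left mat_mult_right)
     (simp add: vec_eq_iff mat_def algebra_simps)

lemma intertwining_cancel_shift:
  fixes A :: "'a::field^'n^'n" and G P :: "'a^'r^'r" and X :: "'a^'r^'n"
  assumes AX: "A ** X = X ** G" and commute: "(G - mat z) ** P = P ** (G - mat z)"
    and invertible: "invertible (G - mat z) \<or> invertible (A - mat z)"
    and zero: "X ** P ** (G - mat z) = 0"
  shows "X ** P = 0"
  using invertible
proof
  assume "invertible (G - mat z)"
  then obtain F where F: "(G - mat z) ** F = mat 1"
    by (auto simp: invertible_def)
  have "X ** P = X ** P ** (G - mat z) ** F"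
    by (simp add: F flip: matrix_mul_assoc)
  then show "X ** P = 0"
    using zero by simp
next
  assume "invertible (A - mat z)"
  then obtain F where F: "F ** (A - mat z) = mat 1"
    by (auto simp: invertible_def)
  have "X ** (G - mat z) = (A - mat z) ** X"
    by (simp add: matrix_diff_ldistrib matrix_diff_rdistrib AX mat_mult_commute)
  then have "(A - mat z) ** (X ** P) = X ** P ** (G - mat z)"
    by (metis commute matrix_mul_assoc)
  then have "F ** ((A - mat z) ** (X ** P)) = 0"
    using zero by simp
  then show "X ** P = 0"
    by (simp add: F matrix_mul_assoc)
qed

text \<open>Peeling off the linear factors of an annihilating polynomial of \<open>G\<close> one at a time, each
  factor is cancelled either on the side of \<open>G\<close> or, through \<open>A X = X G\<close>, on the side of \<open>A\<close>.\<close>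
lemma intertwining_matrix_eq_0:
  fixes A :: "complex^'n^'n" and G :: "complex^'r^'r" and X :: "complex^'r^'n"
  assumes AX: "A ** X = X ** G"
    and disjoint: "\<And>z. invertible (G - mat z) \<or> invertible (A - mat z)"
  shows "X = 0"
proof -
  obtain d z where annihilator: "matrix_prod d (\<lambda>i. G - mat (z i)) = 0"
    using linear_factors_annihilate by blast
  have peel: "X ** matrix_prod k (\<lambda>i. G - mat (z i)) = 0 \<Longrightarrow> X = 0" for k
  proof (induction k)
    case (Suc k)
    have "(G - mat (z k)) ** matrix_prod k (\<lambda>i. G - mat (z i))
        = matrix_prod k (\<lambda>i. G - mat (z i)) ** (G - mat (z k))"
      by (rule matrix_prod_commute) (simp add: shifts_commute)
    then have "X ** matrix_prod k (\<lambda>i. G - mat (z i)) = 0"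
      using Suc.prems
      by (intro intertwining_cancel_shift[OF AX _ disjoint]) (simp_all add: matrix_mul_assoc)
    then show ?case
      by (rule Suc.IH)
  qed simp
  show ?thesis
    by (rule peel[of d]) (simp add: annihilator)
qed

section \<open>Hurwitz matrices and Sylvester equations\<close>

lemma mat_matrix_vector_mult: "(mat z :: 'a::comm_semiring_1^'n^'n) *v v = z *s v"
  unfolding matrix_vector_mult_def mat_def
  by (auto simp: vec_eq_iff if_distrib if_distribR sum.delta cong: if_cong)

lemma hurwitz_iff_shift_invertible:
  "hurwitz A \<longleftrightarrow> (\<forall>z. 0 \<le> Re z \<longrightarrow> invertible (map_matrix complex_of_real A - mat z))"
proof -
  have "invertible (map_matrix complex_of_real A - mat z)
          \<longleftrightarrow> (\<forall>v. map_matrix complex_of_real A *v v = z *s v \<longrightarrow> v = 0)" for z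
    by (simp add: invertible_left_inverse matrix_left_invertible_ker
        matrix_vector_mult_diff_rdistrib mat_matrix_vector_mult)
  then show ?thesis
    unfolding hurwitz_def by (metis not_le)
qed

lemma invertible_transpose_iff: "invertible (transpose A) \<longleftrightarrow> invertible (A::'a::field^'n^'n)"
  by (simp add: invertible_det_nz)

lemma invertible_uminus: "invertible (A::'a::ring_1^'n^'n) \<Longrightarrow> invertible (- A)"
  unfolding invertible_def by (metis matrix_mult_minus_left matrix_mult_minus_right minus_minus)

lemma map_matrix_of_real_transpose:
  "map_matrix complex_of_real (transpose A) = transpose (map_matrix complex_of_real A)"
  by (simp add: vec_eq_iff transpose_def)

lemma hurwitz_transpose: "hurwitz A \<Longrightarrow> hurwitz (transpose A)"
proof -
  have "map_matrix complex_of_real (transpose A) - mat z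
      = transpose (map_matrix complex_of_real A - mat z)" for z
    by (simp add: map_matrix_of_real_transpose transpose_diff)
  then show "hurwitz A \<Longrightarrow> hurwitz (transpose A)"
    by (simp add: hurwitz_iff_shift_invertible invertible_transpose_iff)
qed

lemma map_matrix_of_real_mult:
  "map_matrix complex_of_real (A ** B)
    = map_matrix complex_of_real A ** map_matrix complex_of_real B"
  by (simp add: vec_eq_iff matrix_matrix_mult_def)

lemma map_matrix_of_real_add:
  "map_matrix complex_of_real (A + B) = map_matrix complex_of_real A + map_matrix complex_of_real B"
  by (simp add: vec_eq_iff)

lemma map_matrix_of_real_eq_0_iff: "map_matrix complex_of_real A = 0 \<longleftrightarrow> A = 0"
  by (simp add: vec_eq_iff)

text \<open>Complexified, \<open>A X + X B\<^sup>T = 0\<close> says that \<open>X\<close> intertwines \<open>A\<close> and \<open>-B\<^sup>T\<close>, whose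
  spectra lie in opposite open half planes.\<close>
lemma sylvester_homogeneous_eq_0:
  fixes A :: "real^'n^'n" and B :: "real^'r^'r" and X :: "real^'r^'n"
  assumes A: "hurwitz A" and B: "hurwitz B" and eq: "A ** X + X ** transpose B = 0"
  shows "X = 0"
proof -
  let ?c = "map_matrix complex_of_real"
  let ?G = "- transpose (?c B)"
  have "?c (A ** X + X ** transpose B) = 0"
    using eq by (simp add: map_matrix_of_real_eq_0_iff)
  then have "?c A ** ?c X = ?c X ** ?G"
    by (simp add: map_matrix_of_real_add map_matrix_of_real_mult map_matrix_of_real_transpose
        matrix_mult_minus_right add_eq_0_iff)
  moreover have "invertible (?G - mat z) \<or> invertible (?c A - mat z)" for z
  proof (cases "0 \<le> Re z")
    case False
    then have "invertible (?c B - mat (- z))"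
      using B by (simp add: hurwitz_iff_shift_invertible)
    then have "invertible (- transpose (?c B - mat (- z)))"
      by (simp add: invertible_uminus invertible_transpose_iff)
    then show ?thesis
      by (simp add: transpose_add transpose_diff mat_uminus)
  qed (use A in \<open>simp add: hurwitz_iff_shift_invertible\<close>)
  ultimately have "?c X = 0"
    by (rule intertwining_matrix_eq_0)
  then show ?thesis
    by (simp add: map_matrix_of_real_eq_0_iff)
qed

lemma sylvester_solution_unique:
  fixes A :: "real^'n^'n" and B :: "real^'r^'r" and Y Z R :: "real^'r^'n"
  assumes "hurwitz A" "hurwitz B"
    and "A ** Y + Y ** transpose B + R = 0" "A ** Z + Z ** transpose B + R = 0"
  shows "Z = Y"
proof -
  have "A ** (Z - Y) + (Z - Y) ** transpose B
      = (A ** Z + Z ** transpose B + R) - (A ** Y + Y ** transpose B + R)"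
    by (simp add: matrix_diff_ldistrib matrix_diff_rdistrib algebra_simps)
  also have "\<dots> = 0"
    using assms(3,4) by simp
  finally have "Z - Y = 0"
    by (rule sylvester_homogeneous_eq_0[OF assms(1,2)])
  then show ?thesis by simp
qed

lemma sylvester_the_eq:
  fixes A :: "real^'n^'n" and B :: "real^'r^'r" and Y R :: "real^'r^'n"
  assumes "hurwitz A" "hurwitz B" "A ** Y + Y ** transpose B + R = 0"
  shows "(THE Z. A ** Z + Z ** transpose B + R = 0) = Y"
proof (rule the_equality)
  show "Z = Y" if "A ** Z + Z ** transpose B + R = 0" for Z
    using sylvester_solution_unique[OF assms that] .
qed (rule assms(3))

lemma lyapunov_solution_symmetric:
  fixes A P Q :: "real^'n^'n"
  assumes "hurwitz A" "A ** P + P ** transpose A + Q = 0" "transpose Q = Q"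
  shows "transpose P = P"
proof (rule sylvester_solution_unique[OF assms(1,1,2)])
  have "transpose (A ** P + P ** transpose A + Q) = 0"
    using assms(2) by simp
  then show "A ** transpose P + transpose P ** transpose A + Q = 0"
    using assms(3) by (simp add: transpose_add matrix_transpose_mul add.commute)
qed

lemma dual_lyapunov_solution_symmetric:
  fixes A P Q :: "real^'n^'n"
  assumes "hurwitz A" "transpose A ** P + P ** A + Q = 0" "transpose Q = Q"
  shows "transpose P = P"
  using lyapunov_solution_symmetric[OF hurwitz_transpose[OF assms(1)]] assms(2,3) by simp

lemma inner_sylvester_solution_adjoint:
  fixes A :: "real^'n^'n" and G :: "real^'r^'r" and Y K R :: "real^'r^'n"
  assumes "A ** Y + Y ** transpose G + R = 0" and "transpose A ** K + K ** G = Q"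
  shows "Y \<bullet> Q = - (R \<bullet> K)"
proof -
  have "A ** Y + Y ** transpose G = - R"
    using assms(1) by (simp add: eq_neg_iff_add_eq_0)
  then show ?thesis
    using inner_sylvester_adjoint[of A Y G K] assms(2) by simp
qed

section \<open>Differentiation\<close>

lemma linear_perturbation_bounded_below:
  fixes S0 S1 :: "'a::euclidean_space \<Rightarrow> 'b::euclidean_space"
  assumes "linear S0" "linear S1" "inj S0"
  obtains c \<delta> where "c > 0" "\<delta> > 0" "\<And>t y. \<bar>t\<bar> < \<delta> \<Longrightarrow> c * norm y \<le> norm (S0 y + t *\<^sub>R S1 y)"
proof -
  obtain c where c: "c > 0" "\<And>y. c * norm y \<le> norm (S0 y)"
    using linear_inj_bounded_below_pos[OF assms(1,3)] by blast
  obtain d where d: "d > 0" "\<And>y. norm (S1 y) \<le> d * norm y"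
    using linear_bounded_pos[OF assms(2)] by blast
  have "c / 2 * norm y \<le> norm (S0 y + t *\<^sub>R S1 y)" if t: "\<bar>t\<bar> < c / (2 * d)" for t y
  proof -
    have "norm (t *\<^sub>R S1 y) \<le> \<bar>t\<bar> * (d * norm y)"
      using d(2)[of y] by (simp add: mult_left_mono)
    also have "\<dots> = \<bar>t\<bar> * d * norm y"
      by (simp add: mult.assoc)
    also have "\<dots> \<le> c / 2 * norm y"
      using t d(1) by (intro mult_right_mono) (simp_all add: field_simps)
    finally show ?thesis
      using c(2)[of y] norm_diff_ineq[of "S0 y" "t *\<^sub>R S1 y"] by simp
  qed
  then show thesis
    using c(1) d(1) by (intro that[of "c / 2" "c / (2 * d)"]) simp_all
qed

lemma linear_bounded_below_ex1_solution:
  fixes S :: "'a::euclidean_space \<Rightarrow> 'a"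
  assumes S: "linear S" and c: "c > 0" "\<And>y. c * norm y \<le> norm (S y)"
  shows "\<exists>!y. S y + r = 0"
proof -
  have "S y = 0 \<Longrightarrow> y = 0" for y
    using c(2)[of y] c(1) by (simp add: mult_le_0_iff)
  then have "inj S"
    using linear_injective_0[OF S] by blast
  then obtain y where y: "S y = - r"
    using linear_injective_imp_surjective[OF S] by (metis surjD)
  show ?thesis
  proof (rule ex1I[of _ y])
    show "S y + r = 0"
      using y by simp
    show "z = y" if "S z + r = 0" for z
      using that y \<open>inj S\<close> by (metis eq_neg_iff_add_eq_0 injD)
  qed
qed

lemma has_vector_derivative_quadratic_remainder:
  fixes y :: "real \<Rightarrow> 'a::real_normed_vector"
  assumes "\<delta> > 0" and "\<And>t. \<bar>t\<bar> < \<delta> \<Longrightarrow> norm (y t - y 0 - t *\<^sub>R y') \<le> K * t\<^sup>2"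
  shows "(y has_vector_derivative y') (at 0)"
proof -
  have "((\<lambda>h. norm (y (0 + h) - y 0 - h *\<^sub>R y') / norm h) \<longlongrightarrow> 0) (at 0)"
  proof (rule Lim_null_comparison)
    have "norm (y h - y 0 - h *\<^sub>R y') / \<bar>h\<bar> \<le> K * \<bar>h\<bar>" if "h \<noteq> 0" "\<bar>h\<bar> < \<delta>" for h
      using assms(2)[OF that(2)] that(1) by (simp add: field_simps power2_eq_square)
    then show "\<forall>\<^sub>F h in at 0. norm (norm (y (0 + h) - y 0 - h *\<^sub>R y') / norm h) \<le> K * \<bar>h\<bar>"
      unfolding eventually_at using assms(1) by (auto intro!: exI[of _ \<delta>])
    have "((\<lambda>h. K * \<bar>h\<bar>) \<longlongrightarrow> K * \<bar>0\<bar>) (at (0::real))"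
      by (intro tendsto_intros)
    then show "((\<lambda>h. K * \<bar>h\<bar>) \<longlongrightarrow> 0) (at (0::real))"
      by simp
  qed
  then have "(y has_derivative (\<lambda>h. h *\<^sub>R y')) (at 0)"
    unfolding has_derivative_at by (simp add: bounded_linear_scaleR_left)
  then show ?thesis
    by (simp add: has_vector_derivative_def)
qed

text \<open>Writing \<open>e(t) = y(t) - y\<^sub>0 - t y\<^sub>1\<close>, the equation gives
  \<open>(S\<^sub>0 + t S\<^sub>1) e(t) = - t\<^sup>2 (R\<^sub>2 + S\<^sub>1 y\<^sub>1)\<close>, so \<open>e(t) = O(t\<^sup>2)\<close> since \<open>S\<^sub>0 + t S\<^sub>1\<close> is
  uniformly bounded below for small \<open>t\<close>.\<close>
lemma linear_equation_solution_has_vector_derivative: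
  fixes S0 S1 :: "'a::euclidean_space \<Rightarrow> 'a"
  assumes S0: "linear S0" "inj S0" and S1: "linear S1"
    and y0: "S0 y0 + R0 = 0" and y1: "S0 y1 + S1 y0 + R1 = 0"
  shows "((\<lambda>t. THE y. S0 y + t *\<^sub>R S1 y + (R0 + t *\<^sub>R R1 + t\<^sup>2 *\<^sub>R R2) = 0)
            has_vector_derivative y1) (at 0)"
proof -
  define S where "S t y = S0 y + t *\<^sub>R S1 y" for t y
  define R where "R t = R0 + t *\<^sub>R R1 + t\<^sup>2 *\<^sub>R R2" for t
  define y where "y t = (THE y. S t y + R t = 0)" for t
  obtain c \<delta> where c: "c > 0" and \<delta>: "\<delta> > 0"
    and below: "\<And>t z. \<bar>t\<bar> < \<delta> \<Longrightarrow> c * norm z \<le> norm (S t z)"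
    using linear_perturbation_bounded_below[OF S0(1) S1 S0(2)] unfolding S_def by blast
  have linear_S: "linear (S t)" for t
    unfolding S_def
    by (rule linearI) (simp_all add: linear_add[OF S0(1)] linear_add[OF S1] linear_scale[OF S0(1)]
        linear_scale[OF S1] algebra_simps)
  have y_eq: "S t (y t) + R t = 0" if "\<bar>t\<bar> < \<delta>" for t
    unfolding y_def
    using theI'[OF linear_bounded_below_ex1_solution[OF linear_S c below[OF that]]] .
  have "S0 (y 0) = S0 y0"
    using y_eq[of 0] \<delta> y0 by (simp add: S_def R_def eq_neg_iff_add_eq_0[symmetric])
  then have y_0: "y 0 = y0"
    by (rule injD[OF S0(2)])
  have Sy0: "S t y0 = - R0 + t *\<^sub>R S1 y0" for t
    using y0 by (simp add: S_def eq_neg_iff_add_eq_0)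
  have "S0 y1 = - (S1 y0 + R1)"
    using y1 by (metis add.assoc eq_neg_iff_add_eq_0)
  then have Sy1: "S t y1 = - (S1 y0 + R1) + t *\<^sub>R S1 y1" for t
    by (simp add: S_def)
  have "norm (y t - y 0 - t *\<^sub>R y1) \<le> norm (R2 + S1 y1) / c * t\<^sup>2" if t: "\<bar>t\<bar> < \<delta>" for t
  proof -
    have "S t (y t - y0 - t *\<^sub>R y1) = S t (y t) - S t y0 - t *\<^sub>R S t y1"
      by (simp add: linear_diff[OF linear_S] linear_scale[OF linear_S])
    also have "\<dots> = - (t\<^sup>2 *\<^sub>R (R2 + S1 y1))"
      unfolding Sy0 Sy1 eq_neg_iff_add_eq_0[THEN iffD2, OF y_eq[OF t]]
      by (simp add: R_def algebra_simps power2_eq_square)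
    finally have "c * norm (y t - y0 - t *\<^sub>R y1) \<le> t\<^sup>2 * norm (R2 + S1 y1)"
      using below[OF t, of "y t - y0 - t *\<^sub>R y1"] by simp
    then show ?thesis
      using c by (simp add: y_0 field_simps)
  qed
  then show ?thesis
    unfolding y_def S_def R_def by (rule has_vector_derivative_quadratic_remainder[OF \<delta>])
qed

lemma sylvester_solution_has_vector_derivative:
  fixes A A' :: "real^'n^'n" and G G' :: "real^'r^'r" and R R' R'' Y :: "real^'r^'n"
    and Af :: "real \<Rightarrow> real^'n^'n" and Gf :: "real \<Rightarrow> real^'r^'r" and Rf :: "real \<Rightarrow> real^'r^'n"
  assumes A: "hurwitz A" and G: "hurwitz G"
    and Af: "\<And>t. Af t = A + t *\<^sub>R A'" and Gf: "\<And>t. Gf t = G + t *\<^sub>R G'"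
    and Rf: "\<And>t. Rf t = R + t *\<^sub>R R' + t\<^sup>2 *\<^sub>R R''"
    and Y: "A ** Y + Y ** transpose G + R = 0"
  obtains Y' where "A ** Y' + Y' ** transpose G + (A' ** Y + Y ** transpose G' + R') = 0"
    and "((\<lambda>t. THE Z. Af t ** Z + Z ** transpose (Gf t) + Rf t = 0)
      has_vector_derivative Y') (at 0)"
proof -
  define S0 where "S0 Z = A ** Z + Z ** transpose G" for Z :: "real^'r^'n"
  define S1 where "S1 Z = A' ** Z + Z ** transpose G'" for Z :: "real^'r^'n"
  have linear_S0: "linear S0" and linear_S1: "linear S1"
    unfolding S0_def S1_def
    by (rule linearI; simp add: matrix_mult_distribs algebra_simps)+
  have "inj S0"
    unfolding linear_injective_0[OF linear_S0] S0_def
    using sylvester_homogeneous_eq_0[OF A G] by blast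
  then obtain Y' where Y': "S0 Y' = - (S1 Y + R')"
    using linear_injective_imp_surjective[OF linear_S0] by (metis surjD)
  have "Af t ** Z + Z ** transpose (Gf t) + Rf t
      = S0 Z + t *\<^sub>R S1 Z + (R + t *\<^sub>R R' + t\<^sup>2 *\<^sub>R R'')" for t Z
    by (simp add: Af Gf Rf S0_def S1_def transpose_add transpose_scalar matrix_mult_distribs
        algebra_simps)
  moreover have "((\<lambda>t. THE Z. S0 Z + t *\<^sub>R S1 Z + (R + t *\<^sub>R R' + t\<^sup>2 *\<^sub>R R'') = 0)
      has_vector_derivative Y') (at 0)"
    using Y Y' unfolding S0_def[symmetric]
    by (intro linear_equation_solution_has_vector_derivative[OF linear_S0 \<open>inj S0\<close> linear_S1])
       (simp_all add: eq_neg_iff_add_eq_0 add.assoc)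
  ultimately show thesis
    using Y' by (intro that[of Y']) (simp_all add: S0_def S1_def eq_neg_iff_add_eq_0 add.assoc)
qed

lemma bounded_bilinear_matrix_mult:
  "bounded_bilinear ((**) :: real^'n^'m \<Rightarrow> real^'k^'n \<Rightarrow> real^'k^'m)"
  by (rule bilinear_conv_bounded_bilinear[THEN iffD1])
     (auto simp: bilinear_def intro!: linearI simp: matrix_mult_distribs)

lemma bounded_linear_trace: "bounded_linear (trace :: real^'n^'n \<Rightarrow> real)"
  by (rule linear_conv_bounded_linear[THEN iffD1], rule linearI)
     (simp_all add: trace_def sum.distrib sum_distrib_left)

lemma bounded_linear_transpose: "bounded_linear (transpose :: real^'n^'m \<Rightarrow> real^'m^'n)"
  by (rule linear_conv_bounded_linear[THEN iffD1], rule linearI)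
     (simp_all add: transpose_add transpose_scalar)

lemma has_vector_derivative_matrix_mult [derivative_intros]:
  fixes f :: "real \<Rightarrow> real^'n^'m" and g :: "real \<Rightarrow> real^'k^'n"
  assumes "(f has_vector_derivative f') (at x within s)"
    and "(g has_vector_derivative g') (at x within s)"
  shows "((\<lambda>x. f x ** g x) has_vector_derivative f x ** g' + f' ** g x) (at x within s)"
  using bounded_bilinear.has_vector_derivative[OF bounded_bilinear_matrix_mult assms] .

lemma has_vector_derivative_trace [derivative_intros]:
  fixes f :: "real \<Rightarrow> real^'n^'n"
  shows "(f has_vector_derivative f') F \<Longrightarrow> ((\<lambda>x. trace (f x)) has_vector_derivative trace f') F"
  by (rule bounded_linear.has_vector_derivative[OF bounded_linear_trace])

lemma has_vector_derivative_transpose [derivative_intros]: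
  fixes f :: "real \<Rightarrow> real^'n^'m"
  shows "(f has_vector_derivative f') F \<Longrightarrow>
    ((\<lambda>x. transpose (f x)) has_vector_derivative transpose f') F"
  by (rule bounded_linear.has_vector_derivative[OF bounded_linear_transpose])

lemma has_real_derivative_trace_mult_transpose:
  fixes C :: "real^'n^'p" and X :: "real \<Rightarrow> real^'r^'n" and Y :: "real \<Rightarrow> real^'r^'p"
  assumes "(X has_vector_derivative X') (at t)" "(Y has_vector_derivative Y') (at t)"
  shows "((\<lambda>s. trace (C ** X s ** transpose (Y s))) has_real_derivative
      X' \<bullet> (transpose C ** Y t) + Y' \<bullet> (C ** X t)) (at t)"
  unfolding has_real_derivative_iff_has_vector_derivative
  by (rule has_vector_derivative_eq_rhs, (rule derivative_intros assms)+)
     (simp add: matrix_mult_distribs trace_add trace_mult_transpose_eq_inner[of "C ** X t" Y']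
        trace_mult3_transpose_eq_inner_left[of C X' "Y t"])

lemma has_real_derivative_trace_congruence:
  fixes Y :: "real \<Rightarrow> real^'r^'p" and S :: "real \<Rightarrow> real^'r^'r"
  assumes "(Y has_vector_derivative Y') (at t)" "(S has_vector_derivative S') (at t)"
    and "transpose (S t) = S t"
  shows "((\<lambda>s. trace (Y s ** S s ** transpose (Y s))) has_real_derivative
      S' \<bullet> (transpose (Y t) ** Y t) + 2 * (Y' \<bullet> (Y t ** S t))) (at t)"
  unfolding has_real_derivative_iff_has_vector_derivative
  by (rule has_vector_derivative_eq_rhs, (rule derivative_intros assms)+)
     (simp add: matrix_mult_distribs trace_add trace_mult_transpose_eq_inner[of "Y t ** S t" Y']
        trace_mult3_transpose_eq_inner_left[of "Y t" S' "Y t"]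
        trace_mult3_transpose_eq_inner_right[of Y' "S t" "Y t"] assms(3))

lemma has_real_derivative_trace_sandwich:
  fixes M :: "real^'n^'n" and X :: "real \<Rightarrow> real^'r^'n" and N :: "real \<Rightarrow> real^'r^'r"
  assumes "(X has_vector_derivative X') (at t)" "(N has_vector_derivative N') (at t)"
    and M: "transpose M = M" and N: "transpose (N t) = N t"
  shows "((\<lambda>s. trace (transpose (X s) ** M ** X s ** N s)) has_real_derivative
      2 * (X' \<bullet> (M ** X t ** N t)) + N' \<bullet> (transpose (X t) ** M ** X t)) (at t)"
proof -
  have "transpose (transpose (X t) ** M ** X t) = transpose (X t) ** M ** X t"
    by (simp add: matrix_transpose_mul matrix_mul_assoc M)
  from trace_symmetric_mult_eq_inner[OF this, of N']
  have dN: "trace (transpose (X t) ** M ** X t ** N') = N' \<bullet> (transpose (X t) ** M ** X t)"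
    by (simp add: inner_commute)
  have dX: "trace (transpose X' ** M ** X t ** N t) = X' \<bullet> (M ** X t ** N t)"
    by (simp add: inner_matrix_eq_trace matrix_mul_assoc)
  show ?thesis
    unfolding has_real_derivative_iff_has_vector_derivative
    by (rule has_vector_derivative_eq_rhs, (rule derivative_intros assms)+)
       (simp add: matrix_mult_distribs trace_add dN dX
          trace_symmetric_sandwich[OF M N, of "X t" X'])
qed

lemma has_real_derivative_trace_mult_square:
  fixes S N :: "real \<Rightarrow> real^'r^'r"
  assumes "(S has_vector_derivative S') (at t)" "(N has_vector_derivative N') (at t)"
    and S: "transpose (S t) = S t" and N: "transpose (N t) = N t"
  shows "((\<lambda>s. trace (S s ** N s ** S s ** N s)) has_real_derivative
      2 * (S' \<bullet> (N t ** S t ** N t)) + 2 * (N' \<bullet> (S t ** N t ** S t))) (at t)"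
proof -
  have cyclic: "trace (S' ** N t ** S t ** N t) = trace (N t ** S t ** N t ** S')"
    "trace (S t ** N t ** S' ** N t) = trace (N t ** S t ** N t ** S')"
    "trace (S t ** N' ** S t ** N t) = trace (S t ** N t ** S t ** N')"
    using trace_mul_sym[of S' "N t ** S t ** N t"] trace_mul_sym[of "S t ** N t ** S'" "N t"]
      trace_mul_sym[of "S t ** N'" "S t ** N t"]
    by (simp_all add: matrix_mul_assoc)
  have "transpose (N t ** S t ** N t) = N t ** S t ** N t"
    by (simp add: matrix_transpose_mul matrix_mul_assoc S N)
  from trace_symmetric_mult_eq_inner[OF this, of S']
  have dS: "trace (N t ** S t ** N t ** S') = S' \<bullet> (N t ** S t ** N t)"
    by (simp add: inner_commute)
  have "transpose (S t ** N t ** S t) = S t ** N t ** S t"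
    by (simp add: matrix_transpose_mul matrix_mul_assoc S N)
  from trace_symmetric_mult_eq_inner[OF this, of N']
  have dN: "trace (S t ** N t ** S t ** N') = N' \<bullet> (S t ** N t ** S t)"
    by (simp add: inner_commute)
  show ?thesis
    unfolding has_real_derivative_iff_has_vector_derivative
    by (rule has_vector_derivative_eq_rhs, (rule derivative_intros assms)+)
       (simp add: matrix_mult_distribs trace_add dS dN cyclic)
qed

section \<open>The error as a function of the reduced matrices\<close>

definition h2_cost :: "real^'n^'p \<Rightarrow> real^'n^'n \<Rightarrow> real^'n^'n \<Rightarrow> real^'r^'n \<Rightarrow> real^'r^'r
    \<Rightarrow> real^'r^'p \<Rightarrow> real^'r^'r \<Rightarrow> real" where
  "h2_cost C M P X Ph Ch Mh =
     trace (C ** P ** transpose C - 2 *\<^sub>R (C ** X ** transpose Ch) + Ch ** Ph ** transpose Ch)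
     + (trace (P ** M ** P ** M) - 2 * trace (transpose X ** M ** X ** Mh)
        + trace (Ph ** Mh ** Ph ** Mh))"

lemma h2_cost_has_real_derivative:
  fixes C :: "real^'n^'p" and M P :: "real^'n^'n"
  assumes X: "(X has_vector_derivative X') (at t)" and Ph: "(Ph has_vector_derivative Ph') (at t)"
    and Ch: "(Ch has_vector_derivative Ch') (at t)" and Mh: "(Mh has_vector_derivative Mh') (at t)"
    and M: "transpose M = M" and Mh_sym: "transpose (Mh t) = Mh t"
    and Ph_sym: "transpose (Ph t) = Ph t"
  shows "((\<lambda>s. h2_cost C M P (X s) (Ph s) (Ch s) (Mh s)) has_real_derivative
      Ph' \<bullet> (transpose (Ch t) ** Ch t + 2 *\<^sub>R (Mh t ** Ph t ** Mh t))
      - 2 * (X' \<bullet> (transpose C ** Ch t + 2 *\<^sub>R (M ** X t ** Mh t)))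
      + 2 * (Ch' \<bullet> (Ch t ** Ph t - C ** X t))
      + 2 * (Mh' \<bullet> (Ph t ** Mh t ** Ph t - transpose (X t) ** M ** X t))) (at t)"
proof -
  have expand: "h2_cost C M P (X s) (Ph s) (Ch s) (Mh s) =
      trace (C ** P ** transpose C) - 2 * trace (C ** X s ** transpose (Ch s))
      + trace (Ch s ** Ph s ** transpose (Ch s)) + (trace (P ** M ** P ** M)
      - 2 * trace (transpose (X s) ** M ** X s ** Mh s)
      + trace (Ph s ** Mh s ** Ph s ** Mh s))" for s
    by (simp add: h2_cost_def trace_add trace_sub trace_scaleR)
  show ?thesis
    unfolding expand
    by (rule DERIV_cong, (rule DERIV_add DERIV_diff DERIV_cmult DERIV_const
        has_real_derivative_trace_mult_transpose[OF X Ch]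
        has_real_derivative_trace_congruence[OF Ch Ph Ph_sym]
        has_real_derivative_trace_sandwich[OF X Mh M Mh_sym]
        has_real_derivative_trace_mult_square[OF Ph Mh Ph_sym Mh_sym])+)
       (simp add: inner_add_right inner_diff_right algebra_simps)
qed

definition h2_error :: "real^'n^'n \<Rightarrow> real^'m^'n \<Rightarrow> real^'n^'p \<Rightarrow> real^'n^'n
    \<Rightarrow> real^'r^'r \<Rightarrow> real^'m^'r \<Rightarrow> real^'r^'p \<Rightarrow> real^'r^'r \<Rightarrow> real" where
  "h2_error A B C M Ah Bh Ch Mh =
     h2_cost C M (THE P. A ** P + P ** transpose A + B ** transpose B = 0)
       (THE X. A ** X + X ** transpose Ah + B ** transpose Bh = 0)
       (THE Ph. Ah ** Ph + Ph ** transpose Ah + Bh ** transpose Bh = 0) Ch Mh"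

lemma J1_eq_h2_error:
  "J1 A B C M W V = h2_error A B C M (red_A A W V) (red_B B W) (red_C C V) (red_M M V)"
  by (simp add: J1_def h2_error_def h2_cost_def Let_def)

lemma gramians_have_vector_derivative:
  fixes A :: "real^'n^'n" and B :: "real^'m^'n" and X :: "real^'r^'n" and Ah Ah' Ph :: "real^'r^'r"
    and Bh Bh' :: "real^'m^'r" and Ahf :: "real \<Rightarrow> real^'r^'r" and Bhf :: "real \<Rightarrow> real^'m^'r"
  assumes A: "hurwitz A" and Ah: "hurwitz Ah"
    and Ahf: "\<And>t. Ahf t = Ah + t *\<^sub>R Ah'" and Bhf: "\<And>t. Bhf t = Bh + t *\<^sub>R Bh'"
    and X: "A ** X + X ** transpose Ah + B ** transpose Bh = 0"
    and Ph: "Ah ** Ph + Ph ** transpose Ah + Bh ** transpose Bh = 0"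
  obtains X' Ph'
  where "A ** X' + X' ** transpose Ah + (X ** transpose Ah' + B ** transpose Bh') = 0"
    and "Ah ** Ph' + Ph' ** transpose Ah
      + (Ah' ** Ph + Ph ** transpose Ah' + (Bh ** transpose Bh' + Bh' ** transpose Bh)) = 0"
    and "((\<lambda>t. THE Y. A ** Y + Y ** transpose (Ahf t) + B ** transpose (Bhf t) = 0)
      has_vector_derivative X') (at 0)"
    and "((\<lambda>t. THE Y. Ahf t ** Y + Y ** transpose (Ahf t) + Bhf t ** transpose (Bhf t) = 0)
      has_vector_derivative Ph') (at 0)"
proof -
  have const: "A = A + t *\<^sub>R 0" for t :: real
    by simp
  have BBhf: "B ** transpose (Bhf t)
      = B ** transpose Bh + t *\<^sub>R (B ** transpose Bh') + t\<^sup>2 *\<^sub>R 0" for t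
    by (simp add: Bhf transpose_add transpose_scalar matrix_mult_distribs)
  have BhBhf: "Bhf t ** transpose (Bhf t) = Bh ** transpose Bh
      + t *\<^sub>R (Bh ** transpose Bh' + Bh' ** transpose Bh) + t\<^sup>2 *\<^sub>R (Bh' ** transpose Bh')" for t
    by (simp add: Bhf transpose_add transpose_scalar matrix_mult_distribs algebra_simps
        power2_eq_square)
  obtain X'
    where X': "A ** X' + X' ** transpose Ah + (0 ** X + X ** transpose Ah' + B ** transpose Bh') = 0"
    and dX: "((\<lambda>t. THE Y. A ** Y + Y ** transpose (Ahf t) + B ** transpose (Bhf t) = 0)
      has_vector_derivative X') (at 0)"
    by (rule sylvester_solution_has_vector_derivative[where Af = "\<lambda>t. A" and Gf = Ahf
          and Rf = "\<lambda>t. B ** transpose (Bhf t)", OF A Ah const Ahf BBhf X])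
  obtain Ph' where Ph': "Ah ** Ph' + Ph' ** transpose Ah
      + (Ah' ** Ph + Ph ** transpose Ah' + (Bh ** transpose Bh' + Bh' ** transpose Bh)) = 0"
    and dPh: "((\<lambda>t. THE Y. Ahf t ** Y + Y ** transpose (Ahf t) + Bhf t ** transpose (Bhf t) = 0)
      has_vector_derivative Ph') (at 0)"
    by (rule sylvester_solution_has_vector_derivative[where Af = Ahf and Gf = Ahf
          and Rf = "\<lambda>t. Bhf t ** transpose (Bhf t)", OF Ah Ah Ahf Ahf BhBhf Ph])
  show thesis
    by (rule that[OF _ Ph' dX dPh]) (use X' in simp)
qed

lemma cross_gramian_derivative_pairing:
  fixes A M :: "real^'n^'n" and B :: "real^'m^'n" and C :: "real^'n^'p"
    and X X' K :: "real^'r^'n" and Ah Ah' Mh :: "real^'r^'r" and Bh' :: "real^'m^'r"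
    and Ch :: "real^'r^'p"
  assumes X': "A ** X' + X' ** transpose Ah + (X ** transpose Ah' + B ** transpose Bh') = 0"
    and K: "transpose A ** K + K ** Ah - transpose C ** Ch - 2 *\<^sub>R (M ** X ** Mh) = 0"
  shows "X' \<bullet> (transpose C ** Ch + 2 *\<^sub>R (M ** X ** Mh))
      = - (Ah' \<bullet> (transpose K ** X) + Bh' \<bullet> (transpose K ** B))"
proof -
  have "transpose A ** K + K ** Ah = transpose C ** Ch + 2 *\<^sub>R (M ** X ** Mh)"
    using K by (simp add: algebra_simps)
  from inner_sylvester_solution_adjoint[OF X' this] show ?thesis
    by (simp add: inner_add_left inner_matrix_mult_transpose)
qed

lemma reduced_gramian_derivative_pairing:
  fixes Ah Ah' Ph Ph' L Mh :: "real^'r^'r" and Bh Bh' :: "real^'m^'r" and Ch :: "real^'r^'p"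
  assumes Ph': "Ah ** Ph' + Ph' ** transpose Ah
      + (Ah' ** Ph + Ph ** transpose Ah' + (Bh ** transpose Bh' + Bh' ** transpose Bh)) = 0"
    and L: "transpose Ah ** L + L ** Ah + transpose Ch ** Ch + 2 *\<^sub>R (Mh ** Ph ** Mh) = 0"
    and Ph_sym: "transpose Ph = Ph" and L_sym: "transpose L = L"
  shows "Ph' \<bullet> (transpose Ch ** Ch + 2 *\<^sub>R (Mh ** Ph ** Mh))
      = 2 * (Ah' \<bullet> (L ** Ph)) + 2 * (Bh' \<bullet> (L ** Bh))"
proof -
  have "transpose Ah ** L + L ** Ah = - (transpose Ch ** Ch + 2 *\<^sub>R (Mh ** Ph ** Mh))"
    unfolding eq_neg_iff_add_eq_0 add.assoc[symmetric] by (rule L)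
  from inner_sylvester_solution_adjoint[OF Ph' this]
  have "Ph' \<bullet> (transpose Ch ** Ch + 2 *\<^sub>R (Mh ** Ph ** Mh))
      = (Ph ** transpose Ah' + Ah' ** transpose Ph) \<bullet> L
        + (Bh ** transpose Bh' + Bh' ** transpose Bh) \<bullet> L"
    by (simp add: inner_add_left inner_add_right inner_diff_right Ph_sym algebra_simps)
  then show ?thesis
    by (simp add: inner_symmetrized_mult[OF L_sym])
qed

lemma h2_error_has_real_derivative:
  fixes A M P :: "real^'n^'n" and B :: "real^'m^'n" and C :: "real^'n^'p"
    and X K :: "real^'r^'n" and Ah Ah' Ph L Mh Mh' :: "real^'r^'r"
    and Bh Bh' :: "real^'m^'r" and Ch Ch' :: "real^'r^'p"
    and Ahf :: "real \<Rightarrow> real^'r^'r" and Bhf :: "real \<Rightarrow> real^'m^'r"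
    and Chf :: "real \<Rightarrow> real^'r^'p" and Mhf :: "real \<Rightarrow> real^'r^'r"
  assumes A: "hurwitz A" and Ah: "hurwitz Ah"
    and M: "transpose M = M" and Mh: "transpose Mh = Mh"
    and Ahf: "\<And>t. Ahf t = Ah + t *\<^sub>R Ah'" and Bhf: "\<And>t. Bhf t = Bh + t *\<^sub>R Bh'"
    and Chf: "Chf 0 = Ch" "(Chf has_vector_derivative Ch') (at 0)"
    and Mhf: "Mhf 0 = Mh" "(Mhf has_vector_derivative Mh') (at 0)"
    and P: "A ** P + P ** transpose A + B ** transpose B = 0"
    and X: "A ** X + X ** transpose Ah + B ** transpose Bh = 0"
    and Ph: "Ah ** Ph + Ph ** transpose Ah + Bh ** transpose Bh = 0"
    and K: "transpose A ** K + K ** Ah - transpose C ** Ch - 2 *\<^sub>R (M ** X ** Mh) = 0"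
    and L: "transpose Ah ** L + L ** Ah + transpose Ch ** Ch + 2 *\<^sub>R (Mh ** Ph ** Mh) = 0"
  shows "((\<lambda>t. h2_error A B C M (Ahf t) (Bhf t) (Chf t) (Mhf t)) has_real_derivative
           2 * (Ah' \<bullet> (transpose K ** X + L ** Ph) + Bh' \<bullet> (transpose K ** B + L ** Bh)
              + Ch' \<bullet> (Ch ** Ph - C ** X) + Mh' \<bullet> (Ph ** Mh ** Ph - transpose X ** M ** X))) (at 0)"
proof -
  have Ph_sym: "transpose Ph = Ph"
    by (rule lyapunov_solution_symmetric[OF Ah Ph]) (simp add: matrix_transpose_mul)
  have L_sym: "transpose L = L"
    by (rule dual_lyapunov_solution_symmetric[OF Ah,
          where Q = "transpose Ch ** Ch + 2 *\<^sub>R (Mh ** Ph ** Mh)"])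
       (use L in \<open>simp_all add: add.assoc transpose_add transpose_scalar matrix_transpose_mul
          Mh Ph_sym matrix_mul_assoc\<close>)
  obtain X' Ph'
    where X': "A ** X' + X' ** transpose Ah + (X ** transpose Ah' + B ** transpose Bh') = 0"
    and Ph': "Ah ** Ph' + Ph' ** transpose Ah
      + (Ah' ** Ph + Ph ** transpose Ah' + (Bh ** transpose Bh' + Bh' ** transpose Bh)) = 0"
    and dX: "((\<lambda>t. THE Y. A ** Y + Y ** transpose (Ahf t) + B ** transpose (Bhf t) = 0)
      has_vector_derivative X') (at 0)"
    and dPh: "((\<lambda>t. THE Y. Ahf t ** Y + Y ** transpose (Ahf t) + Bhf t ** transpose (Bhf t) = 0)
      has_vector_derivative Ph') (at 0)"
    using gramians_have_vector_derivative[OF A Ah Ahf Bhf X Ph] .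
  have "(THE Y. A ** Y + Y ** transpose (Ahf 0) + B ** transpose (Bhf 0) = 0) = X"
    and "(THE Y. Ahf 0 ** Y + Y ** transpose (Ahf 0) + Bhf 0 ** transpose (Bhf 0) = 0) = Ph"
    using sylvester_the_eq[OF A Ah X] sylvester_the_eq[OF Ah Ah Ph] by (simp_all add: Ahf Bhf)
  with h2_cost_has_real_derivative[OF dX dPh Chf(2) Mhf(2) M] Mh Ph_sym Chf(1) Mhf(1)
  have deriv: "((\<lambda>t. h2_error A B C M (Ahf t) (Bhf t) (Chf t) (Mhf t)) has_real_derivative
      Ph' \<bullet> (transpose Ch ** Ch + 2 *\<^sub>R (Mh ** Ph ** Mh))
      - 2 * (X' \<bullet> (transpose C ** Ch + 2 *\<^sub>R (M ** X ** Mh)))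
      + 2 * (Ch' \<bullet> (Ch ** Ph - C ** X))
      + 2 * (Mh' \<bullet> (Ph ** Mh ** Ph - transpose X ** M ** X))) (at 0)"
    unfolding h2_error_def sylvester_the_eq[OF A A P] by simp
  have X'_part: "X' \<bullet> (transpose C ** Ch + 2 *\<^sub>R (M ** X ** Mh))
      = - (Ah' \<bullet> (transpose K ** X) + Bh' \<bullet> (transpose K ** B))"
    by (rule cross_gramian_derivative_pairing[OF X' K])
  have Ph'_part: "Ph' \<bullet> (transpose Ch ** Ch + 2 *\<^sub>R (Mh ** Ph ** Mh))
      = 2 * (Ah' \<bullet> (L ** Ph)) + 2 * (Bh' \<bullet> (L ** Bh))"
    by (rule reduced_gramian_derivative_pairing[OF Ph' L Ph_sym L_sym])
  show ?thesis
    using deriv unfolding X'_part Ph'_part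
    by (rule DERIV_cong) (simp add: inner_add_right algebra_simps)
qed

section \<open>Partial derivatives with respect to \<open>W\<close> and \<open>V\<close>\<close>

context
  fixes A M :: "real^'n^'n" and B :: "real^'m^'n" and C :: "real^'n^1"
    and W V :: "real^'r^'n"
    and P :: "real^'n^'n" and X K :: "real^'r^'n" and Ph L :: "real^'r^'r"
  assumes hA: "hurwitz A"
    and hM: "transpose M = M"
    and hAh: "hurwitz (red_A A W V)"
    and hP: "A ** P + P ** transpose A + B ** transpose B = 0"
    and hX: "A ** X + X ** transpose (red_A A W V) + B ** transpose (red_B B W) = 0"
    and hPh: "red_A A W V ** Ph + Ph ** transpose (red_A A W V)
              + red_B B W ** transpose (red_B B W) = 0"
    and hK: "transpose A ** K + K ** red_A A W V - transpose C ** red_C C V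
             - 2 *\<^sub>R (M ** X ** red_M M V) = 0"
    and hL: "transpose (red_A A W V) ** L + L ** red_A A W V + transpose (red_C C V) ** red_C C V
             + 2 *\<^sub>R (red_M M V ** Ph ** red_M M V) = 0"
begin

lemma red_M_symmetric: "transpose (red_M M V) = red_M M V"
  by (simp add: red_M_def matrix_transpose_mul hM matrix_mul_assoc)

lemma reduced_gramian_symmetric: "transpose Ph = Ph"
  by (rule lyapunov_solution_symmetric[OF hAh hPh]) (simp add: matrix_transpose_mul)

lemma reduced_adjoint_symmetric: "transpose L = L"
proof (rule dual_lyapunov_solution_symmetric[OF hAh])
  show "transpose (red_A A W V) ** L + L ** red_A A W V
      + (transpose (red_C C V) ** red_C C V + 2 *\<^sub>R (red_M M V ** Ph ** red_M M V)) = 0"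
    using hL by (simp add: add.assoc)
qed (simp add: transpose_add transpose_scalar matrix_transpose_mul red_M_symmetric
      reduced_gramian_symmetric matrix_mul_assoc)

lemma J1_partial_W:
  "((\<lambda>t. J1 A B C M (W + t *\<^sub>R ematrix i j) V) has_real_derivative
      ((2::real) *\<^sub>R (A ** V ** (transpose X ** K + Ph ** L)
        + B ** transpose B ** (K + W ** L))) $ i $ j) (at 0)"
proof -
  define E :: "real^'r^'n" where "E = ematrix i j"
  let ?G = "A ** V ** (transpose X ** K + Ph ** L) + B ** transpose B ** (K + W ** L)"
  have "((\<lambda>t. J1 A B C M (W + t *\<^sub>R E) V) has_real_derivative
      2 * ((transpose E ** A ** V) \<bullet> (transpose K ** X + L ** Ph)
        + (transpose E ** B) \<bullet> (transpose K ** B + L ** red_B B W) + 0 \<bullet> (red_C C V ** Ph - C ** X)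
        + 0 \<bullet> (Ph ** red_M M V ** Ph - transpose X ** M ** X))) (at 0)"
    unfolding J1_eq_h2_error
    by (rule h2_error_has_real_derivative[OF hA hAh hM red_M_symmetric _ _ _ _ _ _ hP hX hPh hK hL])
       (simp_all add: red_A_def red_B_def transpose_add transpose_scalar matrix_mult_distribs
         matrix_mul_assoc)
  moreover have "(transpose E ** A ** V) \<bullet> (transpose K ** X + L ** Ph)
        + (transpose E ** B) \<bullet> (transpose K ** B + L ** red_B B W) = E \<bullet> ?G"
    using inner_transpose_matrix_mult[of E "A ** V"] inner_transpose_matrix_mult[of E B]
    by (simp add: matrix_mul_assoc inner_add_right transpose_add matrix_transpose_mul
        reduced_adjoint_symmetric reduced_gramian_symmetric red_B_def matrix_mult_distribs)
  ultimately have "((\<lambda>t. J1 A B C M (W + t *\<^sub>R E) V) has_real_derivative 2 * (E \<bullet> ?G)) (at 0)"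
    by simp
  then show ?thesis
    by (simp add: E_def inner_ematrix)
qed

lemma J1_partial_V:
  "((\<lambda>t. J1 A B C M W (V + t *\<^sub>R ematrix i j)) has_real_derivative
      ((2::real) *\<^sub>R (transpose A ** W ** (transpose K ** X + L ** Ph)
          + transpose C ** C ** (V ** Ph - X)
          + 2 *\<^sub>R (M ** V ** (Ph ** red_M M V ** Ph - transpose X ** M ** X)))) $ i $ j)
    (at 0)"
proof -
  define E :: "real^'r^'n" where "E = ematrix i j"
  let ?S = "Ph ** red_M M V ** Ph - transpose X ** M ** X"
  let ?G = "transpose A ** W ** (transpose K ** X + L ** Ph) + transpose C ** C ** (V ** Ph - X)
    + 2 *\<^sub>R (M ** V ** ?S)"
  have dC: "((\<lambda>t. red_C C (V + t *\<^sub>R E)) has_vector_derivative C ** E) (at 0)"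
    unfolding red_C_def
    by (rule has_vector_derivative_eq_rhs, (rule derivative_intros)+) simp
  have dM: "((\<lambda>t. red_M M (V + t *\<^sub>R E)) has_vector_derivative
      transpose E ** M ** V + transpose V ** M ** E) (at 0)"
    unfolding red_M_def
    by (rule has_vector_derivative_eq_rhs, (rule derivative_intros)+) simp
  have "((\<lambda>t. J1 A B C M W (V + t *\<^sub>R E)) has_real_derivative
      2 * ((transpose W ** A ** E) \<bullet> (transpose K ** X + L ** Ph)
        + 0 \<bullet> (transpose K ** B + L ** red_B B W) + (C ** E) \<bullet> (red_C C V ** Ph - C ** X)
        + (transpose E ** M ** V + transpose V ** M ** E) \<bullet> ?S)) (at 0)"
    unfolding J1_eq_h2_error
    by (rule h2_error_has_real_derivative
          [OF hA hAh hM red_M_symmetric _ _ _ dC _ dM hP hX hPh hK hL])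
       (simp_all add: red_A_def red_C_def red_M_def matrix_mult_distribs)
  moreover have "(transpose W ** A ** E) \<bullet> (transpose K ** X + L ** Ph)
        + (C ** E) \<bullet> (red_C C V ** Ph - C ** X)
        + (transpose E ** M ** V + transpose V ** M ** E) \<bullet> ?S = E \<bullet> ?G"
  proof -
    have "transpose ?S = ?S"
      by (simp add: transpose_diff matrix_transpose_mul reduced_gramian_symmetric red_M_symmetric hM
          matrix_mul_assoc)
    then have "(transpose E ** M ** V + transpose V ** M ** E) \<bullet> ?S = 2 * (E \<bullet> (M ** V ** ?S))"
      using inner_transpose_matrix_mult[of E "M ** V" ?S]
        inner_matrix_mult_left[of "transpose V ** M" E ?S]
      by (simp add: inner_add_left matrix_mul_assoc matrix_transpose_mul hM)
    then show ?thesis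
      using inner_matrix_mult_left[of "transpose W ** A" E] inner_matrix_mult_left[of C E]
      by (simp add: inner_add_right matrix_transpose_mul matrix_mul_assoc red_C_def
          matrix_mult_distribs)
  qed
  ultimately have "((\<lambda>t. J1 A B C M W (V + t *\<^sub>R E)) has_real_derivative 2 * (E \<bullet> ?G)) (at 0)"
    by simp
  then show ?thesis
    by (simp add: E_def inner_ematrix)
qed

end

theorem theorem1:
  fixes A M :: "real^'n^'n" and B :: "real^'m^'n" and C :: "real^'n^1"
    and W V :: "real^'r^'n"
    and P :: "real^'n^'n" and X K :: "real^'r^'n" and Ph L :: "real^'r^'r"
  assumes hA: "hurwitz A"
    and hM: "transpose M = M"
    and hWV: "transpose W ** V = mat 1"
    and hAh: "hurwitz (red_A A W V)"
    and hP: "A ** P + P ** transpose A + B ** transpose B = 0"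
    and hX: "A ** X + X ** transpose (red_A A W V) + B ** transpose (red_B B W) = 0"
    and hPh: "red_A A W V ** Ph + Ph ** transpose (red_A A W V)
              + red_B B W ** transpose (red_B B W) = 0"
    and hK: "transpose A ** K + K ** red_A A W V - transpose C ** red_C C V
             - 2 *\<^sub>R (M ** X ** red_M M V) = 0"
    and hL: "transpose (red_A A W V) ** L + L ** red_A A W V + transpose (red_C C V) ** red_C C V
             + 2 *\<^sub>R (red_M M V ** Ph ** red_M M V) = 0"
  shows "(\<forall>i j. ((\<lambda>t. J1 A B C M (W + t *\<^sub>R ematrix i j) V) has_real_derivative
              ((2::real) *\<^sub>R (A ** V ** (transpose X ** K + Ph ** L)
                  + B ** transpose B ** (K + W ** L))) $ i $ j) (at 0)) \<and>
         (\<forall>i j. ((\<lambda>t. J1 A B C M W (V + t *\<^sub>R ematrix i j)) has_real_derivative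
              ((2::real) *\<^sub>R (transpose A ** W ** (transpose K ** X + L ** Ph)
                  + transpose C ** C ** (V ** Ph - X)
                  + 2 *\<^sub>R (M ** V ** (Ph ** red_M M V ** Ph - transpose X ** M ** X)))) $ i $ j) (at 0))"
proof -
  txt \<open>The formulas hold for arbitrary \<open>W\<close> and \<open>V\<close>.\<close>
  show ?thesis
    using J1_partial_W[OF hA hM hAh hP hX hPh hK hL] J1_partial_V[OF hA hM hAh hP hX hPh hK hL]
    by blast
qed

end
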